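(* Let $E$ be an evident branch, $\alpha$ a sort, and $a,b$ two different $\alpha$-discriminants. Then (1) there exist terms $s\in a$ and $t\in b$ such that $s\neq t\in E$ or $t\neq s\in E$; and (2) there exist no terms $s\in a$ and $t\in b$ such that $(s=t)\in E$.
   Context: Types: a countable set of base types including a distinguished $o$; other base types are sorts. Types: base types and $\sigma\tau$. Countably many names with unique types, infinitely many per type. Terms: names; $st:\mu$ for $s:\tau\mu,t:\tau$; $\lambda x.t:\sigma\tau$ for a name $x:\sigma$, $t:\tau$. $\mathrm{Wff}_\sigma$: terms of type $\sigma$. Logical constants: $\neg:oo$, $=_\sigma:\sigma\sigma o$; other names are variables. Formulas: terms of type $o$; $s=_\sigma t$ is $(=_\sigma s)t$; $s\neq_\sigma t$ is $\neg(s=_\sigma t)$. A fixed type-preserving total normalization operator $[\cdot]$ on terms, with $s$ normal iff $[s]=s$, satisfies $[[s]]=[s]$, $[[s]t]=[st]$, and $[xs_1\dots s_n]=x[s_1]\dots[s_n]$ for any name $x$, $n\ge0$, with $xs_1\dots s_n$ of base type. A branch is a set of normal formulas. $E$ is evident if ($x$ ranges over variables): (DN) $\neg\neg s\in E\Rightarrow s\in E$; (BQ) $s=_ot\in E\Rightarrow$ ($s,t\in E$ or $\neg s,\neg t\in E$); (BE) $s\neq_ot\in E\Rightarrow$ ($s,\neg t\in E$ or $\neg s,t\in E$); (FQ) $s=_{\sigma\tau}t\in E\Rightarrow[su]=[tu]\in E$ for all normal $u:\sigma$; (FE) $s\neq_{\sigma\tau}t\in E\Rightarrow[sx]\neq[tx]\in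 E$ for some variable $x$; (Mat) $xs_1\dots s_n,\neg xt_1\dots t_n\in E\Rightarrow n\ge1$ and $s_i\neq t_i\in E$ for some $i$; (Dec) $xs_1\dots s_n\neq_\alpha xt_1\dots t_n\in E\Rightarrow n\ge 1$ and $s_i\neq t_i\in E$ for some $i$; (Con) $s=_\alpha t,u\neq_\alpha v\in E\Rightarrow$ ($s\neq u,t\neq u\in E$) or ($s\neq v,t\neq v\in E$). A term $u\in\mathrm{Wff}_\alpha$ is $\alpha$-discriminating in $E$ if there is a term $t$ with $u\neq_\alpha t\in E$ or $t\neq_\alpha u\in E$. An $\alpha$-discriminant is a maximal (w.r.t. inclusion) set $a$ of $\alpha$-discriminating terms such that there is no disequation $s\neq t\in E$ with $s,t\in a$. *)

theory Defs
  imports Main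
begin

datatype ty = Base nat | Arr ty ty

abbreviation tyo :: ty where "tyo \<equiv> Base 0"

definition is_sort :: "ty \<Rightarrow> bool" where
  "is_sort \<alpha> \<longleftrightarrow> (\<exists>k. \<alpha> = Base k) \<and> \<alpha> \<noteq> tyo"

definition is_base :: "ty \<Rightarrow> bool" where
  "is_base \<sigma> \<longleftrightarrow> (\<exists>k. \<sigma> = Base k)"

text \<open>Names: countably many, each with a unique type, infinitely many per type.
Variables are Var n \<sigma>; the logical constants are Neg (type oo) and Eq \<sigma>
(type \<sigma>\<sigma>o).\<close>

datatype name = Var nat ty | Neg | Eq ty

fun name_ty :: "name \<Rightarrow> ty" where
  "name_ty (Var n \<sigma>) = \<sigma>"
| "name_ty Neg = Arr tyo tyo"
| "name_ty (Eq \<sigma>) = Arr \<sigma> (Arr \<sigma> tyo)"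

definition is_var :: "name \<Rightarrow> bool" where
  "is_var x \<longleftrightarrow> (\<exists>n \<sigma>. x = Var n \<sigma>)"

datatype tm = Nm name | App tm tm | Lam name tm

inductive wt :: "tm \<Rightarrow> ty \<Rightarrow> bool" where
  wt_Nm: "wt (Nm x) (name_ty x)"
| wt_App: "wt s (Arr \<tau> \<mu>) \<Longrightarrow> wt t \<tau> \<Longrightarrow> wt (App s t) \<mu>"
| wt_Lam: "wt t \<tau> \<Longrightarrow> wt (Lam x t) (Arr (name_ty x) \<tau>)"

definition Wff :: "ty \<Rightarrow> tm set" where
  "Wff \<sigma> = {t. wt t \<sigma>}"

definition happ :: "name \<Rightarrow> tm list \<Rightarrow> tm" where
  "happ x ss = foldl App (Nm x) ss"

definition neg :: "tm \<Rightarrow> tm" where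
  "neg s = App (Nm Neg) s"

definition eqn :: "ty \<Rightarrow> tm \<Rightarrow> tm \<Rightarrow> tm" where
  "eqn \<sigma> s t = App (App (Nm (Eq \<sigma>)) s) t"

definition neqn :: "ty \<Rightarrow> tm \<Rightarrow> tm \<Rightarrow> tm" where
  "neqn \<sigma> s t = neg (eqn \<sigma> s t)"

text \<open>A fixed type-preserving total normalization operator [.] (a HOL function,
hence total) satisfying the stated laws.\<close>

definition normalizer :: "(tm \<Rightarrow> tm) \<Rightarrow> bool" where
  "normalizer nf \<longleftrightarrow>
     (\<forall>s \<sigma>. wt s \<sigma> \<longrightarrow> wt (nf s) \<sigma>)
   \<and> (\<forall>s \<sigma>. wt s \<sigma> \<longrightarrow> nf (nf s) = nf s)
   \<and> (\<forall>s t \<mu>. wt (App s t) \<mu> \<longrightarrow> nf (App (nf s) t) = nf (App s t))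
   \<and> (\<forall>x ss \<sigma>. wt (happ x ss) \<sigma> \<longrightarrow> is_base \<sigma> \<longrightarrow>
         nf (happ x ss) = happ x (map nf ss))"

definition is_normal :: "(tm \<Rightarrow> tm) \<Rightarrow> tm \<Rightarrow> bool" where
  "is_normal nf s \<longleftrightarrow> nf s = s"

definition branch :: "(tm \<Rightarrow> tm) \<Rightarrow> tm set \<Rightarrow> bool" where
  "branch nf E \<longleftrightarrow> (\<forall>s\<in>E. wt s tyo \<and> is_normal nf s)"

definition evident :: "(tm \<Rightarrow> tm) \<Rightarrow> tm set \<Rightarrow> bool" where
  "evident nf E \<longleftrightarrow>
    \<comment> \<open>DN\<close>
    (\<forall>s. neg (neg s) \<in> E \<longrightarrow> s \<in> E)
    \<comment> \<open>BQ\<close>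
  \<and> (\<forall>s t. eqn tyo s t \<in> E \<longrightarrow> (s \<in> E \<and> t \<in> E) \<or> (neg s \<in> E \<and> neg t \<in> E))
    \<comment> \<open>BE\<close>
  \<and> (\<forall>s t. neqn tyo s t \<in> E \<longrightarrow> (s \<in> E \<and> neg t \<in> E) \<or> (neg s \<in> E \<and> t \<in> E))
    \<comment> \<open>FQ\<close>
  \<and> (\<forall>\<sigma> \<tau> s t. eqn (Arr \<sigma> \<tau>) s t \<in> E \<longrightarrow>
        (\<forall>u. wt u \<sigma> \<longrightarrow> is_normal nf u \<longrightarrow> eqn \<tau> (nf (App s u)) (nf (App t u)) \<in> E))
    \<comment> \<open>FE\<close>
  \<and> (\<forall>\<sigma> \<tau> s t. neqn (Arr \<sigma> \<tau>) s t \<in> E \<longrightarrow>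
        (\<exists>n. neqn \<tau> (nf (App s (Nm (Var n \<sigma>)))) (nf (App t (Nm (Var n \<sigma>)))) \<in> E))
    \<comment> \<open>Mat\<close>
  \<and> (\<forall>x ss ts. is_var x \<longrightarrow> happ x ss \<in> E \<longrightarrow> neg (happ x ts) \<in> E \<longrightarrow>
        length ss \<ge> 1 \<and>
        (\<exists>i \<sigma>. i < length ss \<and> i < length ts \<and> neqn \<sigma> (ss ! i) (ts ! i) \<in> E))
    \<comment> \<open>Dec\<close>
  \<and> (\<forall>\<alpha> x ss ts. is_sort \<alpha> \<longrightarrow> is_var x \<longrightarrow> neqn \<alpha> (happ x ss) (happ x ts) \<in> E \<longrightarrow>
        length ss \<ge> 1 \<and>
        (\<exists>i \<sigma>. i < length ss \<and> i < length ts \<and> neqn \<sigma> (ss ! i) (ts ! i) \<in> E))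
    \<comment> \<open>Con\<close>
  \<and> (\<forall>\<alpha> s t u v. is_sort \<alpha> \<longrightarrow> eqn \<alpha> s t \<in> E \<longrightarrow> neqn \<alpha> u v \<in> E \<longrightarrow>
        (neqn \<alpha> s u \<in> E \<and> neqn \<alpha> t u \<in> E) \<or> (neqn \<alpha> s v \<in> E \<and> neqn \<alpha> t v \<in> E))"

definition discriminating :: "tm set \<Rightarrow> ty \<Rightarrow> tm \<Rightarrow> bool" where
  "discriminating E \<alpha> u \<longleftrightarrow> u \<in> Wff \<alpha> \<and> (\<exists>t. neqn \<alpha> u t \<in> E \<or> neqn \<alpha> t u \<in> E)"

definition discr_candidate :: "tm set \<Rightarrow> ty \<Rightarrow> tm set \<Rightarrow> bool" where
  "discr_candidate E \<alpha> a \<longleftrightarrow>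
     (\<forall>u\<in>a. discriminating E \<alpha> u) \<and> \<not> (\<exists>\<sigma> s t. neqn \<sigma> s t \<in> E \<and> s \<in> a \<and> t \<in> a)"

definition discriminant :: "tm set \<Rightarrow> ty \<Rightarrow> tm set \<Rightarrow> bool" where
  "discriminant E \<alpha> a \<longleftrightarrow>
     discr_candidate E \<alpha> a \<and> (\<forall>b. discr_candidate E \<alpha> b \<longrightarrow> a \<subseteq> b \<longrightarrow> b = a)"

end

theory Submission
  imports Defs
begin

text \<open>Two distinct discriminants cannot be merged: otherwise their union would be a larger
candidate, contradicting maximality, and since a disequation always has both sides of the same
type, the only obstruction to merging is a disequation across the two. Given such a disequation
\<open>s' \<noteq> t'\<close>, an equation \<open>s = t\<close> across would by (Con) put a disequation inside one of
the two discriminants.\<close>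

lemma wt_unique: "wt s \<sigma> \<Longrightarrow> wt s \<tau> \<Longrightarrow> \<sigma> = \<tau>"
proof (induction s \<sigma> arbitrary: \<tau> rule: wt.induct)
  case (wt_Nm x)
  then show ?case by (auto elim: wt.cases)
next
  case (wt_App s \<tau>' \<mu> t)
  from wt_App.prems obtain \<tau>2 where "wt s (Arr \<tau>2 \<tau>)" by (auto elim: wt.cases)
  with wt_App.IH(1) show ?case by auto
next
  case (wt_Lam t \<tau>' x)
  from wt_Lam.prems obtain \<tau>2 where "\<tau> = Arr (name_ty x) \<tau>2" "wt t \<tau>2" by (auto elim: wt.cases)
  with wt_Lam.IH show ?case by auto
qed

lemma wt_neqnD: "wt (neqn \<sigma> s t) \<tau> \<Longrightarrow> wt s \<sigma>"
  unfolding neqn_def neg_def eqn_def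
  by (auto elim!: wt.cases[of "App _ _"] elim: wt.cases[of "Nm _"])

lemma branch_neqn_type:
  assumes "branch nf E" and "neqn \<sigma> s t \<in> E" and "wt s \<alpha>"
  shows "\<sigma> = \<alpha>"
  using assms wt_neqnD wt_unique unfolding branch_def by blast

lemma discr_candidate_wt: "discr_candidate E \<alpha> a \<Longrightarrow> u \<in> a \<Longrightarrow> wt u \<alpha>"
  unfolding discr_candidate_def discriminating_def Wff_def by auto

lemma discr_candidate_no_neqn:
  "discr_candidate E \<alpha> a \<Longrightarrow> s \<in> a \<Longrightarrow> t \<in> a \<Longrightarrow> neqn \<sigma> s t \<notin> E"
  unfolding discr_candidate_def by blast

lemma discr_candidate_Un:
  assumes "branch nf E"
    and a: "discr_candidate E \<alpha> a" and b: "discr_candidate E \<alpha> b"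
    and across: "\<not> (\<exists>s\<in>a. \<exists>t\<in>b. neqn \<alpha> s t \<in> E \<or> neqn \<alpha> t s \<in> E)"
  shows "discr_candidate E \<alpha> (a \<union> b)"
  unfolding discr_candidate_def
proof (intro conjI ballI notI)
  fix u assume "u \<in> a \<union> b"
  then show "discriminating E \<alpha> u"
    using a b unfolding discr_candidate_def by auto
next
  assume "\<exists>\<sigma> s t. neqn \<sigma> s t \<in> E \<and> s \<in> a \<union> b \<and> t \<in> a \<union> b"
  then obtain \<sigma> s t where st: "neqn \<sigma> s t \<in> E" "s \<in> a \<union> b" "t \<in> a \<union> b" by blast
  have "wt s \<alpha>"
    using st(2) discr_candidate_wt a b by blast
  with st(1) have "\<sigma> = \<alpha>"
    using branch_neqn_type[OF \<open>branch nf E\<close>] by blast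
  with st show False
    using across discr_candidate_no_neqn[OF a] discr_candidate_no_neqn[OF b] by blast
qed

lemma discriminants_separated:
  assumes "branch nf E" and a: "discriminant E \<alpha> a" and b: "discriminant E \<alpha> b" and "a \<noteq> b"
  shows "\<exists>s\<in>a. \<exists>t\<in>b. neqn \<alpha> s t \<in> E \<or> neqn \<alpha> t s \<in> E"
proof (rule ccontr)
  assume "\<not> ?thesis"
  moreover have "discr_candidate E \<alpha> a" "discr_candidate E \<alpha> b"
    using a b unfolding discriminant_def by auto
  ultimately have "discr_candidate E \<alpha> (a \<union> b)"
    using discr_candidate_Un[OF \<open>branch nf E\<close>] by blast
  with a b have "a \<union> b = a" "a \<union> b = b"
    unfolding discriminant_def by auto
  with \<open>a \<noteq> b\<close> show False by auto
qed

lemma separated_candidates_no_eqn: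
  assumes "evident nf E" and "is_sort \<alpha>"
    and a: "discr_candidate E \<alpha> a" and b: "discr_candidate E \<alpha> b"
    and "s' \<in> a" "t' \<in> b" and sep: "neqn \<alpha> s' t' \<in> E \<or> neqn \<alpha> t' s' \<in> E"
    and "s \<in> a" "t \<in> b"
  shows "eqn \<alpha> s t \<notin> E"
proof
  assume "eqn \<alpha> s t \<in> E"
  then have con: "\<And>u v. neqn \<alpha> u v \<in> E \<Longrightarrow>
      (neqn \<alpha> s u \<in> E \<and> neqn \<alpha> t u \<in> E) \<or> (neqn \<alpha> s v \<in> E \<and> neqn \<alpha> t v \<in> E)"
    using assms(1,2) unfolding evident_def by blast
  have "neqn \<alpha> s s' \<notin> E" "neqn \<alpha> t t' \<notin> E"
    using discr_candidate_no_neqn[OF a \<open>s \<in> a\<close> \<open>s' \<in> a\<close>]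
      discr_candidate_no_neqn[OF b \<open>t \<in> b\<close> \<open>t' \<in> b\<close>] by auto
  with sep con[of s' t'] con[of t' s'] show False by blast
qed

theorem proposition6p4:
  fixes nf :: "tm \<Rightarrow> tm" and E :: "tm set" and \<alpha> :: ty and a b :: "tm set"
  assumes "normalizer nf"
    and "branch nf E"
    and "evident nf E"
    and "is_sort \<alpha>"
    and "discriminant E \<alpha> a"
    and "discriminant E \<alpha> b"
    and "a \<noteq> b"
  shows "(\<exists>s\<in>a. \<exists>t\<in>b. neqn \<alpha> s t \<in> E \<or> neqn \<alpha> t s \<in> E)
       \<and> \<not> (\<exists>s\<in>a. \<exists>t\<in>b. eqn \<alpha> s t \<in> E)"
proof -
  obtain s' t' where "s' \<in> a" "t' \<in> b" "neqn \<alpha> s' t' \<in> E \<or> neqn \<alpha> t' s' \<in> E"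
    using discriminants_separated assms(2,5-7) by blast
  moreover have "discr_candidate E \<alpha> a" "discr_candidate E \<alpha> b"
    using assms(5,6) unfolding discriminant_def by auto
  ultimately show ?thesis
    using separated_candidates_no_eqn[OF assms(3,4)] by metis
qed

end
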